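(* Let $G$ be a group, let $p,q\geq 1$ be integers, and let $A\in M_{2p,2q}(\mathbb{C}G)$ be written as a block matrix $$A=\begin{pmatrix} A_{1,1} & A_{1,2}\\ A_{2,1} & A_{2,2}\end{pmatrix}$$ with each block of size $p\times q$. Suppose that $A_{1,1}$ and $A_{2,2}$ both have constant row sum, equal to the same element $r_1\in\mathbb{C}G$, and both have constant column sum, equal to the same element $c_1\in\mathbb{C}G$; and that $A_{1,2}$ and $A_{2,1}$ both have constant row sum, equal to the same element $r_2\in\mathbb{C}G$, and both have constant column sum, equal to the same element $c_2\in\mathbb{C}G$. Then $Q_p A Q_q = A$, where for a positive integer $m$ $$Q_m=\begin{pmatrix} I_m-\frac1m J_m & \frac1m J_m\\ \frac1m J_m & I_m-\frac1m J_m\end{pmatrix}\in M_{2m}(\mathbb{C}G).$$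
   Context: $\mathbb{C}G$ denotes the complex group algebra of $G$, with neutral element $1_G$; $M_{a,b}(\mathbb{C}G)$ is the set of $a\times b$ matrices with entries in $\mathbb{C}G$. $I_m\in M_m(\mathbb{C}G)$ is the identity matrix (diagonal entries $1_G$), and $J_m\in M_m(\mathbb{C}G)$ is the matrix all of whose entries are $1_G$. "Constant row sum $r$" means every row of the block sums (in $\mathbb{C}G$) to $r$; similarly for column sums. *)

theory Defs
  imports "HOL-Library.Poly_Mapping" "Jordan_Normal_Form.Matrix"
begin

text \<open>The group is a type of class group_add
  (written additively, NOT assumed commutative; neutral element 0). Elements of CG are
  finitely supported functions G => complex; multiplication of poly_mapping is the
  convolution (f*g)(x) = sum over a+b=x of f a * g b, i.e. the group algebra product.\<close>

type_synonym 'g group_alg = "'g \<Rightarrow>\<^sub>0 complex"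

definition scal :: "complex \<Rightarrow> ('g::group_add) group_alg" where
  "scal c = Poly_Mapping.single 0 c"

definition Jmat :: "nat \<Rightarrow> ('g::group_add) group_alg mat" where
  "Jmat m = mat m m (\<lambda>_. 1)"

definition Qmat :: "nat \<Rightarrow> ('g::group_add) group_alg mat" where
  "Qmat m = four_block_mat
     (1\<^sub>m m - scal (1 / of_nat m) \<cdot>\<^sub>m Jmat m) (scal (1 / of_nat m) \<cdot>\<^sub>m Jmat m)
     (scal (1 / of_nat m) \<cdot>\<^sub>m Jmat m) (1\<^sub>m m - scal (1 / of_nat m) \<cdot>\<^sub>m Jmat m)"

definition const_row_sum :: "'a::comm_monoid_add mat \<Rightarrow> 'a \<Rightarrow> bool" where
  "const_row_sum B r \<longleftrightarrow> (\<forall>i < dim_row B. (\<Sum>j < dim_col B. B $$ (i, j)) = r)"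

definition const_col_sum :: "'a::comm_monoid_add mat \<Rightarrow> 'a \<Rightarrow> bool" where
  "const_col_sum B c \<longleftrightarrow> (\<forall>j < dim_col B. (\<Sum>i < dim_row B. B $$ (i, j)) = c)"

end

(* Left multiplication by Q_p replaces a block B by (I - sJ) B + sJ B', where s = 1/p and sJ B
   is the constant matrix whose entries are s times the column sum of B. Hence Q_p A is A with the
   constant d = s (c2 - c1) added to every entry of the diagonal blocks and subtracted from every
   entry of the off-diagonal ones. Symmetrically, right multiplication by Q_q shifts the blocks of
   Q_p A by e = (r2' - r1') t, computed from their new row sums r1' = r1 + q d, r2' = r2 - q d.
   Counting the entries of a p x q block by rows and by columns gives p r = q c, which forces
   e = -d, so the two shifts cancel. *)
theory Submission
  imports Defs
begin

definition shift_mat :: "'a::plus mat \<Rightarrow> 'a \<Rightarrow> 'a mat" where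
  "shift_mat B a = map_mat (\<lambda>x. x + a) B"

lemma shift_mat_carrier_mat [simp]:
  "shift_mat B a \<in> carrier_mat p q \<longleftrightarrow> B \<in> carrier_mat p q"
  by (simp add: shift_mat_def)

lemma shift_mat_shift_mat [simp]:
  "shift_mat (shift_mat B a) b = shift_mat B (a + b :: 'a::semigroup_add)"
  by (rule eq_matI) (auto simp: shift_mat_def add.assoc)

lemma shift_mat_zero [simp]: "shift_mat B (0 :: 'a::monoid_add) = B"
  by (rule eq_matI) (auto simp: shift_mat_def)

lemma const_row_sum_shift_mat:
  fixes B :: "'a::semiring_1 mat"
  assumes "B \<in> carrier_mat p q" and "const_row_sum B r"
  shows "const_row_sum (shift_mat B a) (r + of_nat q * a)"
  using assms by (simp add: const_row_sum_def shift_mat_def sum.distrib)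

lemma const_row_col_sum_double_count:
  fixes B :: "'a::semiring_1 mat"
  assumes "B \<in> carrier_mat p q" and "const_row_sum B r" and "const_col_sum B c"
  shows "of_nat p * r = of_nat q * c"
proof -
  have "of_nat p * r = (\<Sum>i<p. \<Sum>j<q. B $$ (i, j))"
    using assms by (simp add: const_row_sum_def)
  also have "\<dots> = (\<Sum>j<q. \<Sum>i<p. B $$ (i, j))"
    by (rule sum.swap)
  also have "\<dots> = of_nat q * c"
    using assms by (simp add: const_col_sum_def)
  finally show ?thesis .
qed

lemma smult_ones_mat_mult:
  fixes B :: "'a::semiring_1 mat"
  assumes B: "B \<in> carrier_mat p q" and "const_col_sum B c"
  shows "(s \<cdot>\<^sub>m mat p p (\<lambda>_. 1)) * B = mat p q (\<lambda>_. s * c)"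
proof (rule eq_matI)
  fix i j assume "i < dim_row (mat p q (\<lambda>_. s * c))" "j < dim_col (mat p q (\<lambda>_. s * c))"
  then have "i < p" "j < q" by auto
  then show "((s \<cdot>\<^sub>m mat p p (\<lambda>_. 1)) * B) $$ (i, j) = mat p q (\<lambda>_. s * c) $$ (i, j)"
    using assms
    by (simp add: scalar_prod_def const_col_sum_def lessThan_atLeast0 sum_distrib_left[symmetric])
qed (use B in auto)

lemma mult_smult_ones_mat:
  fixes B :: "'a::semiring_1 mat"
  assumes B: "B \<in> carrier_mat p q" and "const_row_sum B r"
  shows "B * (t \<cdot>\<^sub>m mat q q (\<lambda>_. 1)) = mat p q (\<lambda>_. r * t)"
proof (rule eq_matI)
  fix i j assume "i < dim_row (mat p q (\<lambda>_. r * t))" "j < dim_col (mat p q (\<lambda>_. r * t))"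
  then have "i < p" "j < q" by auto
  then show "(B * (t \<cdot>\<^sub>m mat q q (\<lambda>_. 1))) $$ (i, j) = mat p q (\<lambda>_. r * t) $$ (i, j)"
    using assms
    by (simp add: scalar_prod_def const_row_sum_def lessThan_atLeast0 sum_distrib_right[symmetric])
qed (use B in auto)

lemma averaging_mult_left:
  fixes B B' :: "'a::ring_1 mat"
  assumes B: "B \<in> carrier_mat p q" "B' \<in> carrier_mat p q"
    and "const_col_sum B c" "const_col_sum B' c'"
  shows "(1\<^sub>m p - s \<cdot>\<^sub>m mat p p (\<lambda>_. 1)) * B + (s \<cdot>\<^sub>m mat p p (\<lambda>_. 1)) * B'
    = shift_mat B (s * c' - s * c)"
  using assms
  by (auto simp: minus_mult_distrib_mat[of _ p p _ B q] left_mult_one_mat smult_ones_mat_mult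
      shift_mat_def intro!: eq_matI)

lemma averaging_mult_right:
  fixes B B' :: "'a::ring_1 mat"
  assumes B: "B \<in> carrier_mat p q" "B' \<in> carrier_mat p q"
    and "const_row_sum B r" "const_row_sum B' r'"
  shows "B * (1\<^sub>m q - t \<cdot>\<^sub>m mat q q (\<lambda>_. 1)) + B' * (t \<cdot>\<^sub>m mat q q (\<lambda>_. 1))
    = shift_mat B (r' * t - r * t)"
  using assms
  by (auto simp: mult_minus_distrib_mat[of B p q _ q] right_mult_one_mat mult_smult_ones_mat
      shift_mat_def intro!: eq_matI)

definition balance_mat :: "nat \<Rightarrow> 'a::ring_1 \<Rightarrow> 'a mat" where
  "balance_mat m s = four_block_mat
     (1\<^sub>m m - s \<cdot>\<^sub>m mat m m (\<lambda>_. 1)) (s \<cdot>\<^sub>m mat m m (\<lambda>_. 1))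
     (s \<cdot>\<^sub>m mat m m (\<lambda>_. 1)) (1\<^sub>m m - s \<cdot>\<^sub>m mat m m (\<lambda>_. 1))"

lemma balance_mat_mult:
  fixes B11 B12 B21 B22 :: "'a::ring_1 mat"
  assumes "B11 \<in> carrier_mat p q" "B12 \<in> carrier_mat p q"
    and "B21 \<in> carrier_mat p q" "B22 \<in> carrier_mat p q"
    and "const_col_sum B11 c1" "const_col_sum B22 c1"
    and "const_col_sum B12 c2" "const_col_sum B21 c2"
  shows "balance_mat p s * four_block_mat B11 B12 B21 B22 = four_block_mat
    (shift_mat B11 (s * c2 - s * c1)) (shift_mat B12 (- (s * c2 - s * c1)))
    (shift_mat B21 (- (s * c2 - s * c1))) (shift_mat B22 (s * c2 - s * c1))"
proof -
  let ?K = "s \<cdot>\<^sub>m mat p p (\<lambda>_. 1)"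
  have K: "?K \<in> carrier_mat p p" "1\<^sub>m p - ?K \<in> carrier_mat p p"
    by auto
  have "?K * B11 + (1\<^sub>m p - ?K) * B21 = (1\<^sub>m p - ?K) * B21 + ?K * B11"
    using assms K by (intro comm_add_mat) auto
  moreover have "?K * B12 + (1\<^sub>m p - ?K) * B22 = (1\<^sub>m p - ?K) * B22 + ?K * B12"
    using assms K by (intro comm_add_mat) auto
  ultimately show ?thesis
    using assms unfolding balance_mat_def
    by (simp add: mult_four_block_mat[OF K(2) K(1) K(1) K(2)] averaging_mult_left)
qed

lemma mult_balance_mat:
  fixes B11 B12 B21 B22 :: "'a::ring_1 mat"
  assumes "B11 \<in> carrier_mat p q" "B12 \<in> carrier_mat p q"
    and "B21 \<in> carrier_mat p q" "B22 \<in> carrier_mat p q"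
    and "const_row_sum B11 r1" "const_row_sum B22 r1"
    and "const_row_sum B12 r2" "const_row_sum B21 r2"
  shows "four_block_mat B11 B12 B21 B22 * balance_mat q t = four_block_mat
    (shift_mat B11 (r2 * t - r1 * t)) (shift_mat B12 (- (r2 * t - r1 * t)))
    (shift_mat B21 (- (r2 * t - r1 * t))) (shift_mat B22 (r2 * t - r1 * t))"
proof -
  let ?K = "t \<cdot>\<^sub>m mat q q (\<lambda>_. 1)"
  have K: "?K \<in> carrier_mat q q" "1\<^sub>m q - ?K \<in> carrier_mat q q"
    by auto
  have "B11 * ?K + B12 * (1\<^sub>m q - ?K) = B12 * (1\<^sub>m q - ?K) + B11 * ?K"
    using assms K by (intro comm_add_mat) auto
  moreover have "B21 * ?K + B22 * (1\<^sub>m q - ?K) = B22 * (1\<^sub>m q - ?K) + B21 * ?K"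
    using assms K by (intro comm_add_mat) auto
  ultimately show ?thesis
    using assms unfolding balance_mat_def
    by (simp add: mult_four_block_mat[OF assms(1-4) K(2) K(1) K(1) K(2)] averaging_mult_right)
qed

lemma of_nat_inverse_cross_mult:
  fixes r c s t :: "'a::ring_1"
  assumes "of_nat p * s = 1" and "of_nat q * t = 1" and "of_nat p * r = of_nat q * c"
  shows "r * t = s * c"
proof -
  have "s * of_nat p = 1"
    using assms(1) by (simp add: mult_of_nat_commute)
  then have "r * t = s * (of_nat p * r) * t"
    by (metis mult.assoc mult_1_left)
  also have "\<dots> = s * c * (of_nat q * t)"
    using assms(3) by (simp add: mult.assoc mult_of_nat_commute)
  finally show ?thesis
    using assms(2) by simp
qed

lemma balance_mat_sandwich:
  fixes A11 A12 A21 A22 :: "'a::ring_1 mat"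
  assumes s: "of_nat p * s = 1" and t: "of_nat q * t = 1"
    and A: "A11 \<in> carrier_mat p q" "A12 \<in> carrier_mat p q"
      "A21 \<in> carrier_mat p q" "A22 \<in> carrier_mat p q"
    and rs: "const_row_sum A11 r1" "const_row_sum A22 r1"
      "const_row_sum A12 r2" "const_row_sum A21 r2"
    and cs: "const_col_sum A11 c1" "const_col_sum A22 c1"
      "const_col_sum A12 c2" "const_col_sum A21 c2"
  shows "balance_mat p s * four_block_mat A11 A12 A21 A22 * balance_mat q t
    = four_block_mat A11 A12 A21 A22"
proof -
  define d where "d = s * c2 - s * c1"
  have left: "balance_mat p s * four_block_mat A11 A12 A21 A22 = four_block_mat
      (shift_mat A11 d) (shift_mat A12 (- d)) (shift_mat A21 (- d)) (shift_mat A22 d)"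
    unfolding d_def using A cs by (rule balance_mat_mult)
  have "of_nat p * r1 = of_nat q * c1" "of_nat p * r2 = of_nat q * c2"
    using const_row_col_sum_double_count A rs cs by blast+
  then have "of_nat p * (r2 - r1) = of_nat q * (c2 - c1)"
    by (simp add: right_diff_distrib)
  then have "(r2 - r1) * t = d"
    unfolding d_def right_diff_distrib[symmetric] by (rule of_nat_inverse_cross_mult[OF s t])
  moreover have "of_nat q * d * t = d"
    using t by (simp add: mult_of_nat_commute mult.assoc)
  ultimately have "(r2 + of_nat q * - d) * t - (r1 + of_nat q * d) * t = - d"
    by (simp add: algebra_simps)
  moreover have "four_block_mat (shift_mat A11 d) (shift_mat A12 (- d))
      (shift_mat A21 (- d)) (shift_mat A22 d) * balance_mat q t = four_block_mat
      (shift_mat (shift_mat A11 d) e) (shift_mat (shift_mat A12 (- d)) (- e))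
      (shift_mat (shift_mat A21 (- d)) (- e)) (shift_mat (shift_mat A22 d) e)"
    if "e = (r2 + of_nat q * - d) * t - (r1 + of_nat q * d) * t" for e
    unfolding that using A rs by (intro mult_balance_mat const_row_sum_shift_mat) auto
  ultimately show ?thesis
    unfolding left by simp
qed

lemma of_nat_mult_scal_inverse:
  assumes "n \<noteq> 0"
  shows "of_nat n * scal (1 / of_nat n) = (1 :: 'g::group_add group_alg)"
proof -
  have "of_nat n * scal (1 / of_nat n)
      = (Poly_Mapping.single 0 (of_nat n) * Poly_Mapping.single 0 (1 / of_nat n) :: 'g group_alg)"
    by (simp add: scal_def)
  also have "\<dots> = 1"
    using assms by (simp only: mult_single) simp
  finally show ?thesis .
qed

theorem mainTheorem1:
  fixes p q :: nat
    and A A11 A12 A21 A22 :: "('g::group_add) group_alg mat"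
    and r1 r2 c1 c2 :: "'g group_alg"
  assumes "p \<ge> 1" and "q \<ge> 1"
    and "A11 \<in> carrier_mat p q" and "A12 \<in> carrier_mat p q"
    and "A21 \<in> carrier_mat p q" and "A22 \<in> carrier_mat p q"
    and "A = four_block_mat A11 A12 A21 A22"
    and "const_row_sum A11 r1" and "const_row_sum A22 r1"
    and "const_col_sum A11 c1" and "const_col_sum A22 c1"
    and "const_row_sum A12 r2" and "const_row_sum A21 r2"
    and "const_col_sum A12 c2" and "const_col_sum A21 c2"
  shows "Qmat p * A * Qmat q = A"
proof -
  have Q: "Qmat m = balance_mat m (scal (1 / of_nat m))" for m :: nat
    by (simp add: Qmat_def balance_mat_def Jmat_def)
  show ?thesis
    unfolding Q \<open>A = _\<close>
    by (rule balance_mat_sandwich) (use assms in \<open>simp_all add: of_nat_mult_scal_inverse\<close>)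
qed

end
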